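(* Let $(R,\Lambda,S)$ be a generalised Renner–Coxeter system with length function $\ell$, let $r\in R$ and let $(w_1,e,w_2)$ be the normal decomposition of $r$. Then $\ell(r)=\ell(w_1)+\ell(w_2)$.
   Context: For a monoid $R$, $E(R)$ is its set of idempotents, $G(R)$ its unit group. $R$ is factorisable if $R=E(R)G(R)=G(R)E(R)$ and idempotents commute; then $E(R)$ is a semilattice ($e\le f\iff ef=fe=e$) on which $G(R)$ acts by conjugation. For $e\in E(R)$, $W(e)=\{w\in G(R)\mid we=ew\}$, $W_\star(e)=\{w\mid we=ew=e\}$. For a Coxeter system $(W,S)$, $W_I$ is the subgroup generated by $I\subseteq S$. A generalised Renner–Coxeter system is a triple $(R,\Lambda,S)$ with: (ECS1) $R$ factorisable; (ECS2) $\Lambda\subseteq E(R)$ contains exactly one element of each $G(R)$-orbit and is closed under multiplication; (ECS3) $(G(R),S)$ is a Coxeter system; (ECS4) for $e_1\le e_2$ in $E(R)$ there are $w\in G(R)$, $f_1\le f_2$ in $\Lambda$ with $wf_iw^{-1}=e_i$; (ECS5) for $e\in\Lambda$, $W(e)$, $W_\star(e)$ are of the form $W_I$; (ECS6) with $\lambda^\star(e)=\{s\in S\mid se=es\ne e\}$, $e\le f$ in $\Lambda$ implies $\lambda^\star(e)\subseteq\lambda^\star(f)$. $\Lambda_\circ=\Lambda\setminus\{1\}$. The length $\ell(x)$ of $x\in R$ is the minimal number of letters from $S$ in a word over $S\cup\Lambda_\circ$ representing $x$. The normal decomposition of $r$ is the unique triple $(w_1,e,w_2)$ with $e\in\Lambda$,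 $w_1$ of minimal Coxeter length in $w_1W_\star(e)$, $w_2$ of minimal Coxeter length in $W(e)w_2$, and $r=w_1ew_2$. *)

theory Defs
  imports Main
begin

text \<open>The monoid R is modelled as a type 'a of class monoid_mult (the whole type is R).\<close>

definition idems :: "'a::monoid_mult set" where
  "idems = {e. e * e = e}"

definition units :: "'a::monoid_mult set" where
  "units = {w. \<exists>v. w * v = 1 \<and> v * w = 1}"

definition idem_le :: "'a::monoid_mult \<Rightarrow> 'a \<Rightarrow> bool" where
  "idem_le e f \<longleftrightarrow> e * f = e \<and> f * e = e"

definition factorisable :: "'a::monoid_mult itself \<Rightarrow> bool" where
  "factorisable _ \<longleftrightarrow>
     (\<forall>r::'a. \<exists>e\<in>idems. \<exists>g\<in>units. r = e * g) \<and>
     (\<forall>r::'a. \<exists>e\<in>idems. \<exists>g\<in>units. r = g * e) \<and>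
     (\<forall>e\<in>(idems::'a set). \<forall>f\<in>idems. e * f = f * e)"

definition unit_conj :: "'a::monoid_mult \<Rightarrow> 'a \<Rightarrow> 'a \<Rightarrow> bool" where
  "unit_conj g f e \<longleftrightarrow> (\<exists>h. g * h = 1 \<and> h * g = 1 \<and> g * f * h = e)"

text \<open>Congruence on words over S generated by the Coxeter relations
  ss = 1 and (st)^{m(s,t)} = 1 (m s t = 0 encodes m(s,t) = infinity).\<close>
inductive cox_equiv :: "'a set \<Rightarrow> ('a \<Rightarrow> 'a \<Rightarrow> nat) \<Rightarrow> 'a list \<Rightarrow> 'a list \<Rightarrow> bool"
  for S m where
  refl: "u \<in> lists S \<Longrightarrow> cox_equiv S m u u"
| sym: "cox_equiv S m u v \<Longrightarrow> cox_equiv S m v u"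
| trans: "cox_equiv S m u v \<Longrightarrow> cox_equiv S m v w \<Longrightarrow> cox_equiv S m u w"
| braid: "u \<in> lists S \<Longrightarrow> v \<in> lists S \<Longrightarrow> s \<in> S \<Longrightarrow> t \<in> S \<Longrightarrow> m s t \<noteq> 0 \<Longrightarrow>
          cox_equiv S m (u @ concat (replicate (m s t) [s, t]) @ v) (u @ v)"

definition coxeter_system :: "'a::monoid_mult set \<Rightarrow> bool" where
  "coxeter_system S \<longleftrightarrow>
     S \<subseteq> units \<and> (\<forall>s\<in>S. s \<noteq> 1 \<and> s * s = 1) \<and>
     (\<forall>g\<in>units. \<exists>u\<in>lists S. prod_list u = g) \<and>
     (\<exists>m::'a \<Rightarrow> 'a \<Rightarrow> nat.
        (\<forall>s t. m s t = m t s) \<and> (\<forall>s. m s s = 1) \<and>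
        (\<forall>s\<in>S. \<forall>t\<in>S. s \<noteq> t \<longrightarrow> m s t \<noteq> 1) \<and>
        (\<forall>u\<in>lists S. \<forall>v\<in>lists S. prod_list u = prod_list v \<longleftrightarrow> cox_equiv S m u v))"

text \<open>Standard parabolic subgroup W_I (generated by I; as elements of I are involutions,
  the products of words over I form exactly the generated subgroup).\<close>
definition parabolic :: "'a::monoid_mult set \<Rightarrow> 'a set" where
  "parabolic I = {prod_list u | u. u \<in> lists I}"

definition W_cent :: "'a::monoid_mult \<Rightarrow> 'a set" where
  "W_cent e = {w \<in> units. w * e = e * w}"

definition W_star :: "'a::monoid_mult \<Rightarrow> 'a set" where
  "W_star e = {w \<in> units. w * e = e \<and> e * w = e}"

definition lambda_star :: "'a::monoid_mult set \<Rightarrow> 'a \<Rightarrow> 'a set" where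
  "lambda_star S e = {s \<in> S. s * e = e * s \<and> s * e \<noteq> e}"

definition gen_renner_coxeter :: "'a::monoid_mult set \<Rightarrow> 'a set \<Rightarrow> bool" where
  "gen_renner_coxeter \<Lambda> S \<longleftrightarrow>
     factorisable TYPE('a) \<and>
     \<Lambda> \<subseteq> idems \<and>
     (\<forall>e\<in>idems. \<exists>f\<in>\<Lambda>. \<exists>g\<in>units. unit_conj g f e) \<and>
     (\<forall>f1\<in>\<Lambda>. \<forall>f2\<in>\<Lambda>. (\<exists>g\<in>units. unit_conj g f1 f2) \<longrightarrow> f1 = f2) \<and>
     (\<forall>a\<in>\<Lambda>. \<forall>b\<in>\<Lambda>. a * b \<in> \<Lambda>) \<and>
     coxeter_system S \<and>
     (\<forall>e1\<in>idems. \<forall>e2\<in>idems. idem_le e1 e2 \<longrightarrow>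
        (\<exists>w\<in>units. \<exists>f1\<in>\<Lambda>. \<exists>f2\<in>\<Lambda>. idem_le f1 f2 \<and> unit_conj w f1 e1 \<and> unit_conj w f2 e2)) \<and>
     (\<forall>e\<in>\<Lambda>. (\<exists>I\<subseteq>S. W_cent e = parabolic I) \<and> (\<exists>J\<subseteq>S. W_star e = parabolic J)) \<and>
     (\<forall>e\<in>\<Lambda>. \<forall>f\<in>\<Lambda>. idem_le e f \<longrightarrow> lambda_star S e \<subseteq> lambda_star S f)"

definition cox_len :: "'a::monoid_mult set \<Rightarrow> 'a \<Rightarrow> nat" where
  "cox_len S w = (LEAST n. \<exists>u\<in>lists S. prod_list u = w \<and> length u = n)"

definition rlen :: "'a::monoid_mult set \<Rightarrow> 'a set \<Rightarrow> 'a \<Rightarrow> nat" where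
  "rlen \<Lambda> S x = (LEAST n. \<exists>u\<in>lists (S \<union> (\<Lambda> - {1})).
      prod_list u = x \<and> length (filter (\<lambda>a. a \<in> S) u) = n)"

definition normal_decomp :: "'a::monoid_mult set \<Rightarrow> 'a set \<Rightarrow> 'a \<Rightarrow> 'a \<Rightarrow> 'a \<Rightarrow> 'a \<Rightarrow> bool" where
  "normal_decomp \<Lambda> S r w1 e w2 \<longleftrightarrow>
     e \<in> \<Lambda> \<and> w1 \<in> units \<and> w2 \<in> units \<and> r = w1 * e * w2 \<and>
     (\<forall>u\<in>W_star e. cox_len S w1 \<le> cox_len S (w1 * u)) \<and>
     (\<forall>u\<in>W_cent e. cox_len S w2 \<le> cox_len S (u * w2))"

end

theory Submission
  imports Defs "HOL-Library.Sublist"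
begin

text \<open>Reduced words for \<open>w\<^sub>1\<close> and \<open>w\<^sub>2\<close> around the letter \<open>e\<close> give
  \<open>\<ell>(r) \<le> \<ell>(w\<^sub>1) + \<ell>(w\<^sub>2)\<close>, and \<open>\<ell>\<close> is the Coxeter length on units. Conversely, reading a
  word for \<open>r\<close> from the right and absorbing each idempotent letter \<open>g\<close> into the middle keeps a
  factorisation \<open>a f b\<close> with \<open>f \<in> \<Lambda>\<close> and \<open>\<ell>(a) + \<ell>(b)\<close> at most the number of letters
  from \<open>S\<close> read so far: ECS4 rewrites \<open>g a f\<close> as \<open>U h V\<close>, where \<open>h \<in> \<Lambda>\<close> lies below
  \<open>f\<close> and \<open>g\<close> and \<open>a = U X V\<close> is a reduced product of elements of \<open>W(g)\<close>, \<open>W(h)\<close>, \<open>W(f)\<close>.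
  Comparing \<open>a f b = w\<^sub>1 e w\<^sub>2\<close> forces \<open>f = e\<close>, \<open>b = y w\<^sub>2\<close> with \<open>y \<in> W(e)\<close>, and
  \<open>a y \<in> w\<^sub>1 W\<^sub>\<star>(e)\<close>; minimality of \<open>w\<^sub>1\<close>, and additivity of length on minimal coset
  representatives of the parabolic subgroup \<open>W(e)\<close>, give \<open>\<ell>(w\<^sub>1) + \<ell>(w\<^sub>2) \<le> \<ell>(a) + \<ell>(b)\<close>.
  That additivity rests on the deletion condition, which follows from the Coxeter presentation
  because the parity of the number of occurrences of each reflection in a word is invariant
  under the relations.\<close>

definition unit_inv :: "'a::monoid_mult \<Rightarrow> 'a" where
  "unit_inv w = (SOME v. w * v = 1 \<and> v * w = 1)"

lemma unit_inv_right: "w \<in> units \<Longrightarrow> w * unit_inv w = 1"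
  and unit_inv_left: "w \<in> units \<Longrightarrow> unit_inv w * w = 1"
proof -
  assume "w \<in> units"
  then obtain v where "w * v = 1 \<and> v * w = 1" by (auto simp: units_def)
  hence "w * unit_inv w = 1 \<and> unit_inv w * w = 1" unfolding unit_inv_def by (rule someI)
  thus "w * unit_inv w = 1" "unit_inv w * w = 1" by auto
qed

lemma unit_inv_units: "w \<in> units \<Longrightarrow> unit_inv w \<in> units"
  using unit_inv_right[of w] unit_inv_left[of w] by (auto simp: units_def)

lemma units_one [simp]: "1 \<in> units"
  by (auto simp: units_def)

lemma units_mult: "a \<in> units \<Longrightarrow> b \<in> units \<Longrightarrow> a * b \<in> units"
proof -
  assume "a \<in> units" "b \<in> units"
  then obtain a' b' where "a * a' = 1" "a' * a = 1" "b * b' = 1" "b' * b = 1" by (auto simp: units_def)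
  hence "a * b * (b' * a') = 1" "b' * a' * (a * b) = 1"
    by (simp_all add: mult.assoc) (simp_all add: mult.assoc[symmetric])
  thus ?thesis by (auto simp: units_def)
qed

lemma unit_inv_unique: "w \<in> units \<Longrightarrow> w * v = 1 \<Longrightarrow> v = unit_inv w"
  by (metis mult.assoc mult_1_left mult_1_right unit_inv_left)

lemma unit_inv_left_cancel: "g \<in> units \<Longrightarrow> unit_inv g * (g * x) = x"
  by (simp add: mult.assoc[symmetric] unit_inv_left)

lemma unit_inv_right_cancel: "g \<in> units \<Longrightarrow> g * (unit_inv g * x) = x"
  by (simp add: mult.assoc[symmetric] unit_inv_right)

lemma unit_inv_mult: "a \<in> units \<Longrightarrow> b \<in> units \<Longrightarrow> unit_inv (a * b) = unit_inv b * unit_inv a"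
  by (rule unit_inv_unique[symmetric, OF units_mult])
    (simp_all add: mult.assoc unit_inv_right_cancel unit_inv_right)

lemma unit_inv_unit_inv: "a \<in> units \<Longrightarrow> unit_inv (unit_inv a) = a"
  using unit_inv_unique[OF unit_inv_units, of a a] unit_inv_left by metis

lemma unit_conj_iff: "g \<in> units \<Longrightarrow> unit_conj g f e \<longleftrightarrow> g * f * unit_inv g = e"
  unfolding unit_conj_def using unit_inv_right unit_inv_left unit_inv_unique by metis

lemma W_cent_units: "x \<in> W_cent e \<Longrightarrow> x \<in> units"
  and W_cent_comm: "x \<in> W_cent e \<Longrightarrow> x * e = e * x"
  by (simp_all add: W_cent_def)

lemma W_cent_mult: "x \<in> W_cent e \<Longrightarrow> y \<in> W_cent e \<Longrightarrow> x * y \<in> W_cent e"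
  unfolding W_cent_def using units_mult by auto (metis mult.assoc)

lemma W_cent_unit_inv: "x \<in> W_cent e \<Longrightarrow> unit_inv x \<in> W_cent e"
proof -
  assume x: "x \<in> W_cent e"
  hence xu: "x \<in> units" and c: "x * e = e * x" by (auto simp: W_cent_def)
  have "unit_inv x * e = unit_inv x * (e * x) * unit_inv x"
    using unit_inv_right[OF xu] by (metis mult.assoc mult_1_right)
  also have "\<dots> = unit_inv x * (x * e) * unit_inv x" using c by simp
  also have "\<dots> = e * unit_inv x" using unit_inv_left[OF xu] by (metis mult.assoc mult_1_left)
  finally show ?thesis using unit_inv_units[OF xu] by (simp add: W_cent_def)
qed

lemma W_cent_conj: "x \<in> W_cent e \<Longrightarrow> unit_inv x * e * x = e"
  using unit_inv_left_cancel[OF W_cent_units] W_cent_comm by (metis mult.assoc)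

lemma W_cent_if_conj_eq: "g \<in> units \<Longrightarrow> g * e * unit_inv g = e \<Longrightarrow> g \<in> W_cent e"
proof -
  assume g: "g \<in> units" and c: "g * e * unit_inv g = e"
  have "e * g = g * e * (unit_inv g * g)" using c by (simp add: mult.assoc[symmetric])
  thus ?thesis using g unit_inv_left[OF g] by (simp add: W_cent_def)
qed

lemma unit_conj_idems: "g \<in> units \<Longrightarrow> e \<in> idems \<Longrightarrow> g * e * unit_inv g \<in> idems"
proof -
  assume g: "g \<in> units" and e: "e \<in> idems"
  have "g * e * unit_inv g * (g * e * unit_inv g) = g * (e * e) * unit_inv g"
    by (simp add: mult.assoc unit_inv_left_cancel[OF g])
  thus ?thesis using e by (simp add: idems_def)
qed

lemma idem_unit_eq_one: "e \<in> idems \<Longrightarrow> e \<in> units \<Longrightarrow> e = 1"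
proof -
  assume e: "e \<in> idems" "e \<in> units"
  have "e = e * e * unit_inv e" using unit_inv_right[OF e(2)] by (simp add: mult.assoc)
  also have "\<dots> = 1" using e unit_inv_right[OF e(2)] by (simp add: idems_def)
  finally show ?thesis .
qed

lemma parabolic_prod_list: "u \<in> lists I \<Longrightarrow> prod_list u \<in> parabolic I"
  unfolding parabolic_def by blast

lemma subseq_lists: "subseq v u \<Longrightarrow> u \<in> lists A \<Longrightarrow> v \<in> lists A"
  by (auto dest: list_emb_set)

subsection \<open>Reflections of a word and the deletion condition\<close>

text \<open>For a word \<open>s\<^sub>1 \<dots> s\<^sub>n\<close> of involutions the \<open>i\<close>-th entry is the reflection
  \<open>s\<^sub>1 \<cdots> s\<^sub>i\<^sub>-\<^sub>1 s\<^sub>i s\<^sub>i\<^sub>-\<^sub>1 \<cdots> s\<^sub>1\<close>.\<close>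

fun reflections :: "'a::monoid_mult list \<Rightarrow> 'a list" where
  "reflections [] = []"
| "reflections (a # w) = a # map (\<lambda>x. a * x * a) (reflections w)"

lemma length_reflections [simp]: "length (reflections w) = length w"
  by (induct w) auto

lemma reflections_append:
  "reflections (u @ v) =
     reflections u @ map (\<lambda>x. prod_list u * x * prod_list (rev u)) (reflections v)"
  by (induct u) (auto simp: mult.assoc)

lemma in_set_reflectionsE:
  assumes "x \<in> set (reflections w)"
  obtains \<beta> b \<gamma> where "w = \<beta> @ b # \<gamma>" "x = prod_list \<beta> * b * prod_list (rev \<beta>)"
  using assms
proof (induct w arbitrary: x thesis)
  case (Cons c w)
  show ?case
  proof (cases "x = c")
    case True thus ?thesis using Cons.prems(1)[of "[]"] by auto
  next
    case False
    then obtain y where y: "y \<in> set (reflections w)" "x = c * y * c" using Cons.prems(2) by auto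
    show ?thesis
    proof (rule Cons.hyps[OF _ y(1)])
      fix \<beta> b \<gamma> assume "w = \<beta> @ b # \<gamma>" "y = prod_list \<beta> * b * prod_list (rev \<beta>)"
      thus thesis using y Cons.prems(1)[of "c # \<beta>"] by (auto simp: mult.assoc)
    qed
  qed
qed simp

lemma count_list_distinct: "distinct xs \<Longrightarrow> count_list xs x = (if x \<in> set xs then 1 else 0)"
  by (induct xs) auto

definition odd_reflections :: "'a::monoid_mult list \<Rightarrow> 'a set" where
  "odd_reflections w = {t. odd (count_list (reflections w) t)}"

lemma prod_list_alternating: "prod_list (concat (replicate k [s, t])) = (s * t) ^ k"
  for s t :: "'a::monoid_mult"
  by (induct k) (auto simp: mult.assoc)

lemma alternating_snoc: "concat (replicate k [s, t]) @ [s, t] = s # t # concat (replicate k [s, t])"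
  by (induct k) auto

lemma reflections_alternating:
  "reflections (concat (replicate k [s, t])) = map (\<lambda>i. (s * t) ^ i * s) [0..<2*k]"
  for s t :: "'a::monoid_mult"
proof (induct k)
  case (Suc k)
  have s_ts: "s * (t * s) ^ j = (s * t) ^ j * s" for j
    by (induct j) (auto simp: mult.assoc)
  have rev_alt: "rev (concat (replicate k [s, t])) = concat (replicate k [t, s])"
    by (induct k) (auto simp: alternating_snoc)
  have even: "(s * t) ^ k * s * (t * s) ^ k = (s * t) ^ (2*k) * s"
    by (simp add: mult.assoc s_ts mult_2 power_add)
  have odd: "(s * t) ^ k * (s * t * s) * (t * s) ^ k = (s * t) ^ Suc (2*k) * s"
  proof -
    have "(s * t) ^ k * (s * t * s) * (t * s) ^ k = ((s * t) ^ k * (s * t) * (s * t) ^ k) * s"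
      by (simp add: mult.assoc s_ts)
    also have "(s * t) ^ k * (s * t) * (s * t) ^ k = (s * t) ^ Suc (2*k)"
      by (simp only: power_Suc2[symmetric] power_add[symmetric] mult_2 add_Suc)
    finally show ?thesis .
  qed
  have snoc: "concat (replicate (Suc k) [s, t]) = concat (replicate k [s, t]) @ [s, t]"
    by (simp add: alternating_snoc)
  have "reflections (concat (replicate (Suc k) [s, t])) = reflections (concat (replicate k [s, t])) @
      [(s*t)^k * s * (t*s)^k, (s*t)^k * (s*t*s) * (t*s)^k]"
    by (simp only: snoc reflections_append) (simp add: prod_list_alternating rev_alt)
  moreover have "[0..<2 * Suc k] = [0..<2*k] @ [2*k, Suc (2*k)]" by simp
  ultimately show ?case unfolding Suc even odd by simp
qed simp

locale coxeter_presentation =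
  fixes S :: "'a::monoid_mult set" and m :: "'a \<Rightarrow> 'a \<Rightarrow> nat"
  assumes S_units: "S \<subseteq> units"
    and S_involution: "\<And>s. s \<in> S \<Longrightarrow> s * s = 1"
    and S_generates: "\<And>g. g \<in> units \<Longrightarrow> \<exists>u\<in>lists S. prod_list u = g"
    and S_presentation:
      "\<And>u v. u \<in> lists S \<Longrightarrow> v \<in> lists S \<Longrightarrow> prod_list u = prod_list v \<longleftrightarrow> cox_equiv S m u v"
begin

lemma prod_list_units: "u \<in> lists S \<Longrightarrow> prod_list u \<in> units"
  by (induct u) (use S_units units_mult in auto)

lemma prod_list_rev_right: "u \<in> lists S \<Longrightarrow> prod_list u * prod_list (rev u) = 1"
proof (induct u)
  case (Cons a u)
  hence "a * (prod_list u * prod_list (rev u)) * a = 1" by (simp add: S_involution)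
  thus ?case by (simp add: mult.assoc)
qed simp

lemma prod_list_rev_left: "u \<in> lists S \<Longrightarrow> prod_list (rev u) * prod_list u = 1"
  using prod_list_rev_right[of "rev u"] by (simp add: in_lists_conv_set)

lemma alternating_in_lists: "s \<in> S \<Longrightarrow> t \<in> S \<Longrightarrow> concat (replicate k [s, t]) \<in> lists S"
  by (induct k) auto

lemma braid_power_eq_one: assumes "s \<in> S" "t \<in> S" shows "(s * t) ^ m s t = 1"
proof (cases "m s t = 0")
  case False
  have "cox_equiv S m ([] @ concat (replicate (m s t) [s, t]) @ []) ([] @ [])"
    by (rule cox_equiv.braid) (use assms False in auto)
  thus ?thesis
    using S_presentation[of "concat (replicate (m s t) [s, t])" "[]"] assms alternating_in_lists
    by (auto simp: prod_list_alternating)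
qed simp

text \<open>The reflections of a braid relator come in two equal halves, so no parity changes.\<close>

lemma reflections_braid_doubled:
  assumes "s \<in> S" "t \<in> S"
  shows "\<exists>L. reflections (concat (replicate (m s t) [s, t])) = L @ L"
proof -
  let ?f = "\<lambda>i. (s * t) ^ i * s" and ?n = "m s t"
  have halves: "[0..<2 * ?n] = [0..<?n] @ map (\<lambda>i. i + ?n) [0..<?n]"
    unfolding mult_2 map_add_upt by (rule upt_add_eq_append) simp
  have periodic: "?f (i + ?n) = ?f i" for i
    by (simp add: power_add braid_power_eq_one[OF assms])
  show ?thesis unfolding reflections_alternating halves
    by (intro exI[of _ "map ?f [0..<?n]"]) (simp add: comp_def periodic)
qed

lemma odd_reflections_cox_equiv: "cox_equiv S m u v \<Longrightarrow> odd_reflections u = odd_reflections v"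
proof (induct rule: cox_equiv.induct)
  case (braid u v s t)
  let ?B = "concat (replicate (m s t) [s, t])"
    and ?c = "\<lambda>x. prod_list u * x * prod_list (rev u)"
  have pB: "prod_list ?B = 1"
    using braid_power_eq_one[OF braid(3,4)] by (simp add: prod_list_alternating)
  hence pBr: "prod_list (rev ?B) = 1"
    using prod_list_rev_right alternating_in_lists braid(3,4) by (metis mult_1_left)
  obtain L where L: "reflections ?B = L @ L" using reflections_braid_doubled[OF braid(3,4)] by blast
  have "reflections (u @ ?B @ v) = reflections u @ map ?c (L @ L) @ map ?c (reflections v)"
    unfolding reflections_append[of u] reflections_append[of ?B] L by (simp add: pB pBr)
  moreover have "reflections (u @ v) = reflections u @ map ?c (reflections v)"
    by (simp add: reflections_append)
  ultimately show ?case unfolding odd_reflections_def by auto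
qed auto

lemma odd_reflections_prod_list_eq:
  "u \<in> lists S \<Longrightarrow> v \<in> lists S \<Longrightarrow> prod_list u = prod_list v \<Longrightarrow> odd_reflections u = odd_reflections v"
  using S_presentation odd_reflections_cox_equiv by blast

lemma reduced_word_exists:
  "w \<in> units \<Longrightarrow> \<exists>u\<in>lists S. prod_list u = w \<and> length u = cox_len S w"
proof -
  assume "w \<in> units"
  then obtain u where "u \<in> lists S" "prod_list u = w" using S_generates by blast
  hence "\<exists>n. \<exists>u\<in>lists S. prod_list u = w \<and> length u = n" by blast
  from LeastI_ex[OF this] show ?thesis unfolding cox_len_def by blast
qed

lemma cox_len_le_length: "u \<in> lists S \<Longrightarrow> cox_len S (prod_list u) \<le> length u"
  unfolding cox_len_def by (rule Least_le) blast

lemma cox_len_mult_le: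
  assumes "p \<in> units" "q \<in> units" shows "cox_len S (p * q) \<le> cox_len S p + cox_len S q"
proof -
  obtain u where "u \<in> lists S" "prod_list u = p" "length u = cox_len S p"
    using reduced_word_exists[OF assms(1)] by blast
  moreover obtain v where "v \<in> lists S" "prod_list v = q" "length v = cox_len S q"
    using reduced_word_exists[OF assms(2)] by blast
  ultimately show ?thesis using cox_len_le_length[of "u @ v"] by simp
qed

lemma reduced_if_distinct_reflections:
  assumes w: "w \<in> lists S" and dist: "distinct (reflections w)"
  shows "length w \<le> cox_len S (prod_list w)"
proof -
  obtain \<sigma> where \<sigma>: "\<sigma> \<in> lists S" "prod_list \<sigma> = prod_list w" "length \<sigma> = cox_len S (prod_list w)"
    using reduced_word_exists[OF prod_list_units[OF w]] by blast
  have "set (reflections w) = odd_reflections w"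
    unfolding odd_reflections_def by (auto simp: count_list_distinct dist)
  also have "\<dots> = odd_reflections \<sigma>" using odd_reflections_prod_list_eq \<sigma> w by metis
  also have "\<dots> \<subseteq> set (reflections \<sigma>)"
    unfolding odd_reflections_def using count_notin by fastforce
  finally have "card (set (reflections w)) \<le> card (set (reflections \<sigma>))"
    by (intro card_mono) auto
  also have "\<dots> \<le> length \<sigma>" using card_length[of "reflections \<sigma>"] by simp
  finally show ?thesis using \<sigma> distinct_card[OF dist] by simp
qed

lemma deletion_condition:
  "w \<in> lists S \<Longrightarrow> \<not> distinct (reflections w) \<Longrightarrow>
     \<exists>\<alpha> a \<beta> b \<gamma>. w = \<alpha> @ a # \<beta> @ b # \<gamma> \<and> prod_list (\<alpha> @ \<beta> @ \<gamma>) = prod_list w"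
proof (induct w)
  case (Cons c w)
  have c: "c \<in> S" "w \<in> lists S" using Cons.prems by auto
  have cc: "c * (c * x) = x" for x using S_involution[OF c(1)] by (simp add: mult.assoc[symmetric])
  have cc': "x * c * c = x" for x using S_involution[OF c(1)] by (simp add: mult.assoc)
  have "inj (\<lambda>x. c * x * c)"
  proof (rule injI)
    fix x y assume "c * x * c = c * y * c"
    hence "c * (c * x * c) * c = c * (c * y * c) * c" by simp
    thus "x = y" by (simp add: mult.assoc cc) (simp add: mult.assoc[symmetric] cc')
  qed
  hence "c \<in> (\<lambda>x. c * x * c) ` set (reflections w) \<or> \<not> distinct (reflections w)"
    using Cons.prems(2) by (auto simp: distinct_map inj_on_def)
  thus ?case
  proof
    assume "\<not> distinct (reflections w)"
    from Cons.hyps[OF c(2) this] obtain \<alpha> a \<beta> b \<gamma> where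
      "w = \<alpha> @ a # \<beta> @ b # \<gamma>" "prod_list (\<alpha> @ \<beta> @ \<gamma>) = prod_list w" by blast
    thus ?case by (intro exI[of _ "c # \<alpha>"] exI[of _ a] exI[of _ \<beta>] exI[of _ b] exI[of _ \<gamma>]) auto
  next
    assume "c \<in> (\<lambda>x. c * x * c) ` set (reflections w)"
    then obtain x where x: "x \<in> set (reflections w)" "c = c * x * c" by auto
    have "x = c * (c * x * c) * c" by (simp add: mult.assoc cc) (simp add: mult.assoc[symmetric] cc')
    also have "\<dots> = c * c * c" using x(2)[symmetric] by simp
    finally have "x = c" using S_involution[OF c(1)] by simp
    with x obtain \<beta> b \<gamma> where bg: "w = \<beta> @ b # \<gamma>" "c = prod_list \<beta> * b * prod_list (rev \<beta>)"
      by (auto elim: in_set_reflectionsE)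
    have bl: "\<beta> \<in> lists S" "b \<in> S" using bg c by auto
    have "prod_list (c # w) =
        prod_list \<beta> * b * (prod_list (rev \<beta>) * prod_list \<beta>) * b * prod_list \<gamma>"
      using bg by (simp add: mult.assoc)
    also have "\<dots> = prod_list (\<beta> @ \<gamma>)"
      using prod_list_rev_left[OF bl(1)] S_involution[OF bl(2)] by (simp add: mult.assoc)
    finally show ?case using bg(1)
      by (intro exI[of _ "[]"] exI[of _ c] exI[of _ \<beta>] exI[of _ b] exI[of _ \<gamma>]) simp
  qed
qed simp

lemma reduced_subword_exists:
  "w \<in> lists S \<Longrightarrow>
     \<exists>w'. subseq w' w \<and> prod_list w' = prod_list w \<and> length w' = cox_len S (prod_list w)"
proof (induct "length w" arbitrary: w rule: less_induct)
  case less
  show ?case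
  proof (cases "distinct (reflections w)")
    case True
    thus ?thesis using reduced_if_distinct_reflections[OF less.prems True]
        cox_len_le_length[OF less.prems] by (intro exI[of _ w]) auto
  next
    case False
    from deletion_condition[OF less.prems False] obtain \<alpha> a \<beta> b \<gamma> where
      d: "w = \<alpha> @ a # \<beta> @ b # \<gamma>" "prod_list (\<alpha> @ \<beta> @ \<gamma>) = prod_list w" by blast
    have "length (\<alpha> @ \<beta> @ \<gamma>) < length w" "\<alpha> @ \<beta> @ \<gamma> \<in> lists S" using less.prems d by auto
    from less.hyps[OF this] obtain w' where
      w': "subseq w' (\<alpha> @ \<beta> @ \<gamma>)" "prod_list w' = prod_list (\<alpha> @ \<beta> @ \<gamma>)"
        "length w' = cox_len S (prod_list (\<alpha> @ \<beta> @ \<gamma>))" by blast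
    have "subseq (\<alpha> @ \<beta> @ \<gamma>) w"
      unfolding d(1) by (intro list_emb_append_mono list_emb_Cons) auto
    thus ?thesis using w' d by (intro exI[of _ w']) (auto intro: subseq_order.order_trans)
  qed
qed

lemma reduced_subword_append:
  assumes "u \<in> lists S" "v \<in> lists S"
  obtains u' v' where "subseq u' u" "subseq v' v" "prod_list (u' @ v') = prod_list (u @ v)"
    "length u' + length v' = cox_len S (prod_list (u @ v))"
proof -
  obtain \<omega> where \<omega>: "subseq \<omega> (u @ v)" "prod_list \<omega> = prod_list (u @ v)"
    "length \<omega> = cox_len S (prod_list (u @ v))"
    using reduced_subword_exists[of "u @ v"] assms by auto
  from \<omega>(1) obtain u' v' where "\<omega> = u' @ v'" "subseq u' u" "subseq v' v"
    by (auto elim: subseq_appendE)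
  thus thesis using that \<omega> by simp
qed

text \<open>The factors keep their parabolic subgroups because a reduced subword of the
  concatenated words is taken.\<close>

lemma reduced_parabolic_factorisation:
  assumes I: "I\<^sub>1 \<subseteq> S" "I\<^sub>2 \<subseteq> S" "I\<^sub>3 \<subseteq> S"
    and x: "x\<^sub>1 \<in> parabolic I\<^sub>1" "x\<^sub>2 \<in> parabolic I\<^sub>2" "x\<^sub>3 \<in> parabolic I\<^sub>3"
  obtains y\<^sub>1 y\<^sub>2 y\<^sub>3 where "y\<^sub>1 \<in> parabolic I\<^sub>1" "y\<^sub>2 \<in> parabolic I\<^sub>2" "y\<^sub>3 \<in> parabolic I\<^sub>3"
    "y\<^sub>1 * y\<^sub>2 * y\<^sub>3 = x\<^sub>1 * x\<^sub>2 * x\<^sub>3"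
    "cox_len S y\<^sub>1 + cox_len S y\<^sub>2 + cox_len S y\<^sub>3 \<le> cox_len S (x\<^sub>1 * x\<^sub>2 * x\<^sub>3)"
proof -
  obtain u\<^sub>1 u\<^sub>2 u\<^sub>3 where u: "u\<^sub>1 \<in> lists I\<^sub>1" "u\<^sub>2 \<in> lists I\<^sub>2" "u\<^sub>3 \<in> lists I\<^sub>3"
    "x\<^sub>1 = prod_list u\<^sub>1" "x\<^sub>2 = prod_list u\<^sub>2" "x\<^sub>3 = prod_list u\<^sub>3"
    using x unfolding parabolic_def by blast
  have uS: "u\<^sub>1 \<in> lists S" "u\<^sub>2 @ u\<^sub>3 \<in> lists S" using u I by auto
  obtain v\<^sub>1 v\<^sub>2\<^sub>3 where v: "subseq v\<^sub>1 u\<^sub>1" "subseq v\<^sub>2\<^sub>3 (u\<^sub>2 @ u\<^sub>3)"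
    "prod_list (v\<^sub>1 @ v\<^sub>2\<^sub>3) = prod_list (u\<^sub>1 @ u\<^sub>2 @ u\<^sub>3)"
    "length v\<^sub>1 + length v\<^sub>2\<^sub>3 = cox_len S (prod_list (u\<^sub>1 @ u\<^sub>2 @ u\<^sub>3))"
    by (rule reduced_subword_append[OF uS])
  from v(2) obtain v\<^sub>2 v\<^sub>3 where v23: "v\<^sub>2\<^sub>3 = v\<^sub>2 @ v\<^sub>3" "subseq v\<^sub>2 u\<^sub>2" "subseq v\<^sub>3 u\<^sub>3"
    by (auto elim: subseq_appendE)
  have vI: "v\<^sub>1 \<in> lists I\<^sub>1" "v\<^sub>2 \<in> lists I\<^sub>2" "v\<^sub>3 \<in> lists I\<^sub>3"
    using v(1) v23 u subseq_lists by blast+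
  hence "v\<^sub>1 \<in> lists S" "v\<^sub>2 \<in> lists S" "v\<^sub>3 \<in> lists S" using I by auto
  hence "cox_len S (prod_list v\<^sub>1) + cox_len S (prod_list v\<^sub>2) + cox_len S (prod_list v\<^sub>3)
      \<le> length v\<^sub>1 + length v\<^sub>2 + length v\<^sub>3"
    using cox_len_le_length by (intro add_mono) auto
  also have "\<dots> = cox_len S (x\<^sub>1 * x\<^sub>2 * x\<^sub>3)" using v(4) v23(1) u(4-6) by (simp add: mult.assoc)
  finally have "cox_len S (prod_list v\<^sub>1) + cox_len S (prod_list v\<^sub>2) + cox_len S (prod_list v\<^sub>3)
      \<le> cox_len S (x\<^sub>1 * x\<^sub>2 * x\<^sub>3)" .
  thus thesis using that[OF vI[THEN parabolic_prod_list]] v(3) v23(1) u(4-6)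
    by (simp add: mult.assoc)
qed

text \<open>Minimality of \<open>w\<close> in its coset forces a reduced subword of \<open>\<gamma> \<delta>\<close> to keep all
  of the reduced word \<open>\<delta>\<close> for \<open>w\<close>.\<close>

lemma cox_len_min_coset_rep_add:
  assumes I: "I \<subseteq> S" and c: "c \<in> parabolic I" and w: "w \<in> units"
    and min: "\<forall>u\<in>parabolic I. cox_len S w \<le> cox_len S (u * w)"
  shows "cox_len S c + cox_len S w \<le> cox_len S (c * w)"
proof -
  obtain \<gamma>\<^sub>0 where "\<gamma>\<^sub>0 \<in> lists I" "c = prod_list \<gamma>\<^sub>0" using c unfolding parabolic_def by blast
  then obtain \<gamma> where g: "\<gamma> \<in> lists I" "prod_list \<gamma> = c" "length \<gamma> = cox_len S c"
    using reduced_subword_exists[of \<gamma>\<^sub>0] I subseq_lists by (metis lists_mono subsetD)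
  obtain \<delta> where d: "\<delta> \<in> lists S" "prod_list \<delta> = w" "length \<delta> = cox_len S w"
    using reduced_word_exists[OF w] by blast
  have gS: "\<gamma> \<in> lists S" using g I by auto
  obtain \<gamma>' \<delta>' where sp: "subseq \<gamma>' \<gamma>" "subseq \<delta>' \<delta>"
    "prod_list (\<gamma>' @ \<delta>') = c * w" "length \<gamma>' + length \<delta>' = cox_len S (c * w)"
    using reduced_subword_append[OF gS d(1)] g d by auto
  have g'I: "\<gamma>' \<in> lists I" using sp(1) g(1) subseq_lists by blast
  hence g'S: "\<gamma>' \<in> lists S" using I by auto
  have d'S: "\<delta>' \<in> lists S" using sp(2) d(1) subseq_lists by blast
  have "prod_list \<delta>' = prod_list (rev \<gamma>') * prod_list \<gamma>' * prod_list \<delta>'"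
    using prod_list_rev_left[OF g'S] by simp
  also have "\<dots> = prod_list (rev \<gamma>' @ \<gamma>) * w" using sp(3) g(2) by (simp add: mult.assoc)
  finally have "prod_list \<delta>' = prod_list (rev \<gamma>' @ \<gamma>) * w" .
  moreover have "prod_list (rev \<gamma>' @ \<gamma>) \<in> parabolic I"
    using g'I g(1) by (intro parabolic_prod_list) (auto simp: in_lists_conv_set)
  ultimately have "cox_len S w \<le> cox_len S (prod_list \<delta>')" using min by simp
  also have "\<dots> \<le> length \<delta>'" by (rule cox_len_le_length[OF d'S])
  finally have "\<delta>' = \<delta>"
    using d(3) sp(2) subseq_same_length list_emb_length[OF sp(2)] by (metis le_antisym)
  hence "prod_list \<gamma>' * w * unit_inv w = c * w * unit_inv w" using sp(3) d(2) by simp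
  hence "prod_list \<gamma>' = c" using unit_inv_right[OF w] by (simp add: mult.assoc)
  thus ?thesis using cox_len_le_length[OF g'S] sp(4) d(3) \<open>\<delta>' = \<delta>\<close> by simp
qed

end

subsection \<open>Idempotents in a Renner--Coxeter monoid\<close>

locale renner_coxeter = coxeter_presentation S m for \<Lambda> :: "'a::monoid_mult set" and S m +
  assumes idems_commute: "\<And>e f :: 'a. e \<in> idems \<Longrightarrow> f \<in> idems \<Longrightarrow> e * f = f * e"
    and Lambda_idems: "\<Lambda> \<subseteq> idems"
    and Lambda_meets_orbits: "\<And>e. e \<in> idems \<Longrightarrow> \<exists>f\<in>\<Lambda>. \<exists>g\<in>units. unit_conj g f e"
    and Lambda_conj_eq:
      "\<And>f\<^sub>1 f\<^sub>2 g. f\<^sub>1 \<in> \<Lambda> \<Longrightarrow> f\<^sub>2 \<in> \<Lambda> \<Longrightarrow> g \<in> units \<Longrightarrow> unit_conj g f\<^sub>1 f\<^sub>2 \<Longrightarrow> f\<^sub>1 = f\<^sub>2"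
    and idem_le_simultaneous_conj: "\<And>e\<^sub>1 e\<^sub>2. e\<^sub>1 \<in> idems \<Longrightarrow> e\<^sub>2 \<in> idems \<Longrightarrow> idem_le e\<^sub>1 e\<^sub>2 \<Longrightarrow>
        \<exists>w\<in>units. \<exists>f\<^sub>1\<in>\<Lambda>. \<exists>f\<^sub>2\<in>\<Lambda>. idem_le f\<^sub>1 f\<^sub>2 \<and> unit_conj w f\<^sub>1 e\<^sub>1 \<and> unit_conj w f\<^sub>2 e\<^sub>2"
    and W_cent_parabolic: "\<And>e. e \<in> \<Lambda> \<Longrightarrow> \<exists>I\<subseteq>S. W_cent e = parabolic I"
begin

lemma Lambda_idem: "e \<in> \<Lambda> \<Longrightarrow> e * e = e"
  using Lambda_idems by (auto simp: idems_def)

lemma idems_mult: "(e::'a) \<in> idems \<Longrightarrow> f \<in> idems \<Longrightarrow> e * f \<in> idems"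
proof -
  assume e: "e \<in> idems" and f: "f \<in> idems"
  have "e * f * (e * f) = e * (f * e) * f" by (simp add: mult.assoc)
  also have "\<dots> = e * (e * f) * f" by (simp only: idems_commute[OF f e])
  also have "\<dots> = (e * e) * (f * f)" by (simp add: mult.assoc)
  finally show ?thesis using e f by (simp add: idems_def)
qed

lemma idems_mult_le_right: "(e::'a) \<in> idems \<Longrightarrow> f \<in> idems \<Longrightarrow> idem_le (e * f) f"
  using idems_commute[of e f] by (simp add: idem_le_def idems_def mult.assoc)
    (metis mult.assoc)

lemma idems_mult_le_left: "(e::'a) \<in> idems \<Longrightarrow> f \<in> idems \<Longrightarrow> idem_le (e * f) e"
  using idems_mult_le_right[of f e] idems_commute[of e f] by simp

lemma one_in_Lambda: "1 \<in> \<Lambda>"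
proof -
  obtain f g where f: "f \<in> \<Lambda>" "g \<in> units" "unit_conj g f 1"
    using Lambda_meets_orbits[of 1] by (auto simp: idems_def)
  have "f = unit_inv g * (g * f * unit_inv g) * g"
    by (simp add: mult.assoc unit_inv_left_cancel[OF f(2)] unit_inv_left[OF f(2)])
  also have "\<dots> = 1" using f(3) unit_conj_iff[OF f(2)] unit_inv_left[OF f(2)] by simp
  finally show ?thesis using f by simp
qed

lemma idem_le_Lambda_conj:
  assumes e: "e \<in> idems" and f: "f \<in> \<Lambda>" and le: "idem_le e f"
  obtains w h where "w \<in> W_cent f" "h \<in> \<Lambda>" "idem_le h f" "e = w * h * unit_inv w"
proof -
  obtain w h f' where w: "w \<in> units" "h \<in> \<Lambda>" "f' \<in> \<Lambda>" "idem_le h f'"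
    "unit_conj w h e" "unit_conj w f' f"
    using idem_le_simultaneous_conj[OF e _ le] f Lambda_idems by blast
  have "f' = f" using Lambda_conj_eq[OF w(3) f w(1) w(6)] .
  thus thesis using that W_cent_if_conj_eq w unit_conj_iff by metis
qed

lemma Lambda_le_conj_eq:
  assumes h: "h \<in> \<Lambda>" and k: "k \<in> idems" and le: "idem_le h k"
    and t: "t \<in> units" and kt: "k = t * h * unit_inv t"
  shows "k = h"
proof -
  obtain w f\<^sub>1 f\<^sub>2 where w: "w \<in> units" "f\<^sub>1 \<in> \<Lambda>" "f\<^sub>2 \<in> \<Lambda>" "unit_conj w f\<^sub>1 h" "unit_conj w f\<^sub>2 k"
    using idem_le_simultaneous_conj[OF _ k le] h Lambda_idems by blast
  have "f\<^sub>1 = h" using Lambda_conj_eq[OF w(2) h w(1) w(4)] .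
  have wk: "w * f\<^sub>2 * unit_inv w = k" using w unit_conj_iff by blast
  have tw: "unit_inv t * w \<in> units" using units_mult[OF unit_inv_units[OF t] w(1)] .
  have "unit_inv t * w * f\<^sub>2 * unit_inv (unit_inv t * w) = unit_inv t * (w * f\<^sub>2 * unit_inv w) * t"
    using unit_inv_mult[OF unit_inv_units[OF t] w(1)] unit_inv_unit_inv[OF t]
    by (simp add: mult.assoc)
  also have "\<dots> = unit_inv t * k * t" using wk by simp
  also have "\<dots> = h" using kt by (simp add: mult.assoc unit_inv_left_cancel[OF t] unit_inv_left[OF t])
  finally have "f\<^sub>2 = h" using Lambda_conj_eq[OF w(3) h tw] unit_conj_iff[OF tw] by blast
  thus ?thesis using wk w(4) \<open>f\<^sub>1 = h\<close> unit_conj_iff w(1) by metis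
qed

lemma W_cent_sandwich_eq:
  assumes h: "h \<in> \<Lambda>" and g: "g \<in> idems" and f: "f \<in> idems"
    and hg: "h * g = h" and hf: "h * f = h" and X: "X \<in> W_cent h"
    and t: "t \<in> units" and conj: "unit_inv X * g * X * f = t * h * unit_inv t"
  shows "g * X * f = X * h"
proof -
  define k where "k = unit_inv X * g * X * f"
  have Xu: "X \<in> units" using X W_cent_units by blast
  have kI: "k \<in> idems"
    using idems_mult[OF unit_conj_idems[OF unit_inv_units[OF Xu] g] f] unit_inv_unit_inv[OF Xu]
    by (simp add: k_def)
  have "h * k = unit_inv X * (h * g) * X * f"
    using W_cent_comm[OF W_cent_unit_inv[OF X]] by (simp add: k_def mult.assoc[symmetric])
  also have "\<dots> = unit_inv X * (X * h) * f" using hg W_cent_comm[OF X] by (simp add: mult.assoc)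
  also have "\<dots> = h" using hf by (simp add: mult.assoc unit_inv_left_cancel[OF Xu])
  finally have hk: "h * k = h" .
  hence "idem_le h k" using idems_commute[OF kI] h Lambda_idems by (auto simp: idem_le_def)
  hence "k = h" using Lambda_le_conj_eq[OF h kI _ t] conj by (simp add: k_def)
  thus ?thesis unfolding k_def by (metis mult.assoc unit_inv_right_cancel[OF Xu])
qed

lemma Lambda_unit_Lambda_meet:
  assumes g: "g \<in> \<Lambda>" and f: "f \<in> \<Lambda>" and a: "a \<in> units"
  obtains h w w' x where "h \<in> \<Lambda>" "h * g = h" "h * f = h" "w \<in> W_cent f" "w' \<in> W_cent g"
    "x \<in> W_cent h" "w' * x * unit_inv w = a" "unit_inv a * g * a * f = w * h * unit_inv w"
proof -
  have gI: "g \<in> idems" and fI: "f \<in> idems" using g f Lambda_idems by auto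
  have gaI: "unit_inv a * g * a \<in> idems"
    using unit_conj_idems[OF unit_inv_units[OF a] gI] unit_inv_unit_inv[OF a] by simp
  have afI: "a * f * unit_inv a \<in> idems" using unit_conj_idems[OF a fI] .
  define k where "k = unit_inv a * g * a * f"
  have "idem_le k f" unfolding k_def by (rule idems_mult_le_right[OF gaI fI])
  then obtain w h where w: "w \<in> W_cent f" "h \<in> \<Lambda>" "idem_le h f" "k = w * h * unit_inv w"
    by (rule idem_le_Lambda_conj[OF idems_mult[OF gaI fI, folded k_def] f])
  define k' where "k' = a * k * unit_inv a"
  have k'_eq: "k' = g * (a * f * unit_inv a)"
    by (simp add: k'_def k_def mult.assoc unit_inv_right_cancel[OF a])
  have "idem_le k' g" unfolding k'_eq by (rule idems_mult_le_left[OF gI afI])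
  then obtain w' p where w': "w' \<in> W_cent g" "p \<in> \<Lambda>" "idem_le p g" "k' = w' * p * unit_inv w'"
    by (rule idem_le_Lambda_conj[OF idems_mult[OF gI afI, folded k'_eq] g])
  have wu: "w \<in> units" and w'u: "w' \<in> units" using w(1) w'(1) W_cent_units by blast+
  define x where "x = unit_inv w' * a * w"
  have xu: "x \<in> units" using units_mult[OF units_mult[OF unit_inv_units[OF w'u] a] wu]
    by (simp add: x_def)
  have x_inv: "unit_inv x = unit_inv w * unit_inv a * w'"
    using unit_inv_mult[OF units_mult[OF unit_inv_units[OF w'u] a] wu]
      unit_inv_mult[OF unit_inv_units[OF w'u] a] unit_inv_unit_inv[OF w'u]
    by (simp add: x_def mult.assoc)
  have "x * h * unit_inv x = unit_inv w' * k' * w'"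
    unfolding x_inv k'_def w(4) by (simp add: x_def mult.assoc)
  also have "\<dots> = p"
    using w'(4) by (simp add: mult.assoc unit_inv_left_cancel[OF w'u] unit_inv_left[OF w'u])
  finally have xh: "x * h * unit_inv x = p" .
  hence "h = p" using Lambda_conj_eq[OF w(2) w'(2) xu] unit_conj_iff[OF xu] by blast
  hence "x \<in> W_cent h" using W_cent_if_conj_eq[OF xu] xh by simp
  moreover have "h * g = h" "h * f = h" using w(3) w'(3) \<open>h = p\<close> by (auto simp: idem_le_def)
  moreover have "w' * x * unit_inv w = a"
    by (simp add: x_def mult.assoc unit_inv_right_cancel[OF w'u] unit_inv_right[OF wu])
  ultimately show thesis using that w w' k_def by blast
qed

text \<open>Writing \<open>a = U X V\<close> as a reduced product along \<open>W(g) W(h) W(f)\<close>, the elements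
  \<open>U\<close> and \<open>V\<close> are absorbed by \<open>g\<close> and \<open>f\<close>, and \<open>g X f = X h\<close>.\<close>

lemma Lambda_unit_Lambda_decomp:
  assumes g: "g \<in> \<Lambda>" and f: "f \<in> \<Lambda>" and a: "a \<in> units"
  obtains U h V where "U \<in> units" "V \<in> units" "h \<in> \<Lambda>" "g * a * f = U * h * V"
    "cox_len S U + cox_len S V \<le> cox_len S a"
proof -
  have gI: "g \<in> idems" and fI: "f \<in> idems" using g f Lambda_idems by auto
  obtain h w w' x where m: "h \<in> \<Lambda>" "h * g = h" "h * f = h" "w \<in> W_cent f" "w' \<in> W_cent g"
    "x \<in> W_cent h" "w' * x * unit_inv w = a" "unit_inv a * g * a * f = w * h * unit_inv w"
    by (rule Lambda_unit_Lambda_meet[OF g f a])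
  have wu: "w \<in> units" using m(4) W_cent_units by blast
  obtain Ig Ih If where I: "Ig \<subseteq> S" "W_cent g = parabolic Ig" "Ih \<subseteq> S" "W_cent h = parabolic Ih"
    "If \<subseteq> S" "W_cent f = parabolic If"
    using W_cent_parabolic g m(1) f by metis
  obtain U X V where UXV: "U \<in> W_cent g" "X \<in> W_cent h" "V \<in> W_cent f" "U * X * V = a"
    "cox_len S U + cox_len S X + cox_len S V \<le> cox_len S a"
    using reduced_parabolic_factorisation[of Ig Ih If w' x "unit_inv w"] I m(5-7)
      W_cent_unit_inv[OF m(4)] by metis
  have Uu: "U \<in> units" and Xu: "X \<in> units" and Vu: "V \<in> units"
    using UXV W_cent_units by blast+
  have a_inv: "unit_inv a = unit_inv V * unit_inv X * unit_inv U"
    using unit_inv_mult[OF units_mult[OF Uu Xu] Vu] unit_inv_mult[OF Uu Xu] UXV(4)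
    by (simp add: mult.assoc)
  have "unit_inv a * g * a * f = unit_inv V * unit_inv X * (unit_inv U * g * U) * X * (V * f)"
    unfolding a_inv by (simp add: UXV(4)[symmetric] mult.assoc)
  also have "\<dots> = unit_inv V * (unit_inv X * g * X * f) * V"
    using W_cent_conj[OF UXV(1)] W_cent_comm[OF UXV(3)] by (simp add: mult.assoc)
  finally have "unit_inv X * g * X * f = V * (unit_inv a * g * a * f) * unit_inv V"
    by (simp add: mult.assoc unit_inv_right_cancel[OF Vu] unit_inv_right[OF Vu])
  also have "\<dots> = (V * w) * h * unit_inv (V * w)"
    using m(8) unit_inv_mult[OF Vu wu] by (simp add: mult.assoc)
  finally have gXf: "g * X * f = X * h"
    by (rule W_cent_sandwich_eq[OF m(1) gI fI m(2,3) UXV(2) units_mult[OF Vu wu]])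
  have "g * a * f = (g * U) * X * (V * f)" by (simp add: UXV(4)[symmetric] mult.assoc)
  also have "\<dots> = (U * g) * X * (f * V)"
    using W_cent_comm[OF UXV(1)] W_cent_comm[OF UXV(3)] by simp
  also have "\<dots> = U * (g * X * f) * V" by (simp add: mult.assoc)
  also have "\<dots> = (U * X) * h * V" unfolding gXf by (simp add: mult.assoc)
  finally have "g * a * f = (U * X) * h * V" .
  moreover have "cox_len S (U * X) + cox_len S V \<le> cox_len S a"
    using cox_len_mult_le[OF Uu Xu] UXV(5) by simp
  ultimately show thesis using that units_mult[OF Uu Xu] Vu m(1) by blast
qed

abbreviation S_count :: "'a list \<Rightarrow> nat" where
  "S_count \<omega> \<equiv> length (filter (\<lambda>x. x \<in> S) \<omega>)"

lemma word_Lambda_decomp: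
  "\<omega> \<in> lists (S \<union> (\<Lambda> - {1})) \<Longrightarrow>
     \<exists>a f b. a \<in> units \<and> b \<in> units \<and> f \<in> \<Lambda> \<and> prod_list \<omega> = a * f * b \<and>
       cox_len S a + cox_len S b \<le> S_count \<omega>"
proof (induct \<omega>)
  case Nil
  have "cox_len S 1 \<le> 0" using cox_len_le_length[of "[]"] by simp
  thus ?case using one_in_Lambda by (intro exI[of _ 1]) auto
next
  case (Cons c \<omega>)
  from Cons obtain a f b where ab: "a \<in> units" "b \<in> units" "f \<in> \<Lambda>" "prod_list \<omega> = a * f * b"
    "cox_len S a + cox_len S b \<le> S_count \<omega>" by auto
  show ?case
  proof (cases "c \<in> S")
    case True
    have cu: "c \<in> units" using True S_units by auto
    have "cox_len S c \<le> 1" using cox_len_le_length[of "[c]"] True by simp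
    hence "cox_len S (c * a) + cox_len S b \<le> S_count (c # \<omega>)"
      using cox_len_mult_le[OF cu ab(1)] ab True by simp
    moreover have "prod_list (c # \<omega>) = (c * a) * f * b" using ab by (simp add: mult.assoc)
    ultimately show ?thesis using units_mult[OF cu ab(1)] ab by blast
  next
    case False
    hence "c \<in> \<Lambda>" using Cons.prems by auto
    then obtain U h V where c: "U \<in> units" "V \<in> units" "h \<in> \<Lambda>" "c * a * f = U * h * V"
      "cox_len S U + cox_len S V \<le> cox_len S a"
      using Lambda_unit_Lambda_decomp ab(3) ab(1) by metis
    have "prod_list (c # \<omega>) = U * h * (V * b)" using ab c by (simp add: mult.assoc[symmetric])
    moreover have "cox_len S U + cox_len S (V * b) \<le> S_count (c # \<omega>)"
      using cox_len_mult_le[OF c(2) ab(2)] c(5) ab(5) False by simp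
    ultimately show ?thesis using c units_mult[OF c(2) ab(2)] by blast
  qed
qed

lemma Lambda_sandwich_eq:
  assumes e: "e \<in> \<Lambda>" and f: "f \<in> \<Lambda>" and g: "g \<in> units" and q: "q \<in> units"
    and eq: "g * f * q = e"
  shows "f = e" "g \<in> W_cent e" "g * q \<in> W_star e"
proof -
  have eI: "e \<in> idems" and fI: "f \<in> idems" using e f Lambda_idems by auto
  define f' where "f' = g * f * unit_inv g"
  have f'I: "f' \<in> idems" using unit_conj_idems[OF g fI] by (simp add: f'_def)
  have e_f': "e = f' * (g * q)" using eq by (simp add: f'_def mult.assoc unit_inv_left_cancel[OF g])
  hence "f' * e = e" using f'I by (simp add: idems_def mult.assoc[symmetric])
  moreover have "e * f' = f'"
    using e_f' Lambda_idem[OF e] units_mult[OF g q]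
    by (metis mult.assoc mult_1_right unit_inv_right)
  ultimately have f'e: "f' = e" using idems_commute[OF eI f'I] by simp
  thus "f = e" using Lambda_conj_eq[OF f e g] unit_conj_iff[OF g] by (simp add: f'_def)
  show "g \<in> W_cent e" using W_cent_if_conj_eq[OF g] f'e \<open>f = e\<close> by (simp add: f'_def)
  have eq': "e * (g * q) = e" using e_f' f'e by simp
  have "(g * q) * e \<in> idems"
    using eq' Lambda_idem[OF e] by (simp add: idems_def) (metis mult.assoc)
  moreover have "e * ((g * q) * e) = e" using eq' Lambda_idem[OF e] by (simp add: mult.assoc[symmetric])
  ultimately have "(g * q) * e = e"
    using idems_commute[OF eI] Lambda_idem[OF e] by (metis mult.assoc)
  thus "g * q \<in> W_star e" using eq' units_mult[OF g q] by (simp add: W_star_def)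
qed

lemma normal_decomp_cox_len_le:
  assumes nd: "normal_decomp \<Lambda> S r w\<^sub>1 e w\<^sub>2" and a: "a \<in> units" and b: "b \<in> units"
    and f: "f \<in> \<Lambda>" and r: "r = a * f * b"
  shows "cox_len S w\<^sub>1 + cox_len S w\<^sub>2 \<le> cox_len S a + cox_len S b"
proof -
  have e: "e \<in> \<Lambda>" and w\<^sub>1: "w\<^sub>1 \<in> units" and w\<^sub>2: "w\<^sub>2 \<in> units" and rr: "r = w\<^sub>1 * e * w\<^sub>2"
    and min\<^sub>1: "\<forall>u\<in>W_star e. cox_len S w\<^sub>1 \<le> cox_len S (w\<^sub>1 * u)"
    and min\<^sub>2: "\<forall>u\<in>W_cent e. cox_len S w\<^sub>2 \<le> cox_len S (u * w\<^sub>2)"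
    using nd by (auto simp: normal_decomp_def)
  define g where "g = unit_inv w\<^sub>1 * a"
  define q where "q = b * unit_inv w\<^sub>2"
  have gu: "g \<in> units" using units_mult[OF unit_inv_units[OF w\<^sub>1] a] by (simp add: g_def)
  have qu: "q \<in> units" using units_mult[OF b unit_inv_units[OF w\<^sub>2]] by (simp add: q_def)
  have "g * f * q = unit_inv w\<^sub>1 * (w\<^sub>1 * e * w\<^sub>2) * unit_inv w\<^sub>2"
    using r rr by (simp add: g_def q_def mult.assoc)
  also have "\<dots> = e"
    by (simp add: mult.assoc unit_inv_left_cancel[OF w\<^sub>1] unit_inv_right_cancel[OF w\<^sub>2] unit_inv_right[OF w\<^sub>2])
  finally have sw: "g \<in> W_cent e" "g * q \<in> W_star e"
    using Lambda_sandwich_eq[OF e f gu qu] by auto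
  have "g * q \<in> W_cent e" using sw(2) by (simp add: W_star_def W_cent_def)
  hence "unit_inv g * (g * q) \<in> W_cent e" by (rule W_cent_mult[OF W_cent_unit_inv[OF sw(1)]])
  hence qW: "q \<in> W_cent e" using unit_inv_left_cancel[OF gu] by simp
  have b_eq: "b = q * w\<^sub>2" by (simp add: q_def mult.assoc unit_inv_left[OF w\<^sub>2])
  have "a * q = w\<^sub>1 * (g * q)" by (simp add: g_def mult.assoc unit_inv_right_cancel[OF w\<^sub>1])
  hence "cox_len S w\<^sub>1 \<le> cox_len S (a * q)" using min\<^sub>1 sw(2) by simp
  also have "\<dots> \<le> cox_len S a + cox_len S q" by (rule cox_len_mult_le[OF a qu])
  finally have "cox_len S w\<^sub>1 \<le> cox_len S a + cox_len S q" .
  moreover obtain I where I: "I \<subseteq> S" "W_cent e = parabolic I" using W_cent_parabolic[OF e] by blast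
  have "cox_len S q + cox_len S w\<^sub>2 \<le> cox_len S b"
    unfolding b_eq by (rule cox_len_min_coset_rep_add[OF I(1)]) (use qW I min\<^sub>2 w\<^sub>2 in auto)
  ultimately show ?thesis by simp
qed

lemma S_count_lists: "u \<in> lists S \<Longrightarrow> S_count u = length u"
  by (simp add: filter_id_conv in_lists_conv_set)

lemma word_through_Lambda:
  assumes "u \<in> lists S" "v \<in> lists S" "e \<in> \<Lambda>"
  shows "\<exists>\<omega>\<in>lists (S \<union> (\<Lambda> - {1})).
           prod_list \<omega> = prod_list u * e * prod_list v \<and> S_count \<omega> = length u + length v"
proof -
  define \<omega> where "\<omega> = u @ (if e = 1 then [] else [e]) @ v"
  have "e \<noteq> 1 \<Longrightarrow> e \<notin> S" using S_involution Lambda_idem[OF assms(3)] by force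
  hence "S_count \<omega> = length u + length v" using assms S_count_lists by (simp add: \<omega>_def)
  moreover have "\<omega> \<in> lists (S \<union> (\<Lambda> - {1}))" "prod_list \<omega> = prod_list u * e * prod_list v"
    using assms by (auto simp: \<omega>_def mult.assoc)
  ultimately show ?thesis by blast
qed

lemma rlen_le: "\<omega> \<in> lists (S \<union> (\<Lambda> - {1})) \<Longrightarrow> prod_list \<omega> = x \<Longrightarrow> rlen \<Lambda> S x \<le> S_count \<omega>"
  unfolding rlen_def by (rule Least_le) blast

lemma rlen_ge_decomp:
  assumes "\<exists>\<omega>\<in>lists (S \<union> (\<Lambda> - {1})). prod_list \<omega> = x"
  obtains a f b where "a \<in> units" "b \<in> units" "f \<in> \<Lambda>" "x = a * f * b"
    "cox_len S a + cox_len S b \<le> rlen \<Lambda> S x"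
proof -
  have "\<exists>n. \<exists>\<omega>\<in>lists (S \<union> (\<Lambda> - {1})). prod_list \<omega> = x \<and> S_count \<omega> = n" using assms by blast
  from LeastI_ex[OF this] obtain \<omega> where
    "\<omega> \<in> lists (S \<union> (\<Lambda> - {1}))" "prod_list \<omega> = x" "S_count \<omega> = rlen \<Lambda> S x"
    unfolding rlen_def by blast
  thus thesis using that word_Lambda_decomp by metis
qed

lemma rlen_unit: assumes w: "w \<in> units" shows "rlen \<Lambda> S w = cox_len S w"
proof (rule antisym)
  obtain \<sigma> where \<sigma>: "\<sigma> \<in> lists S" "prod_list \<sigma> = w" "length \<sigma> = cox_len S w"
    using reduced_word_exists[OF w] by blast
  then obtain \<omega> where \<omega>: "\<omega> \<in> lists (S \<union> (\<Lambda> - {1}))" "prod_list \<omega> = w"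
    "S_count \<omega> = cox_len S w"
    using word_through_Lambda[OF \<sigma>(1) _ one_in_Lambda, of "[]"] by auto
  thus "rlen \<Lambda> S w \<le> cox_len S w" using rlen_le by metis
  obtain a f b where d: "a \<in> units" "b \<in> units" "f \<in> \<Lambda>" "w = a * f * b"
    "cox_len S a + cox_len S b \<le> rlen \<Lambda> S w"
    using rlen_ge_decomp \<omega>(1,2) by blast
  have "f = unit_inv a * w * unit_inv b"
    using d(4) by (simp add: mult.assoc unit_inv_left_cancel[OF d(1)] unit_inv_right[OF d(2)])
  hence "f \<in> units" using units_mult unit_inv_units d(1,2) w by metis
  hence "f = 1" using idem_unit_eq_one d(3) Lambda_idems by auto
  hence "w = a * b" using d(4) by simp
  thus "cox_len S w \<le> rlen \<Lambda> S w" using cox_len_mult_le[OF d(1,2)] d(5) by simp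
qed

lemma rlen_normal_decomp:
  assumes nd: "normal_decomp \<Lambda> S r w\<^sub>1 e w\<^sub>2"
  shows "rlen \<Lambda> S r = rlen \<Lambda> S w\<^sub>1 + rlen \<Lambda> S w\<^sub>2"
proof -
  have e: "e \<in> \<Lambda>" and w: "w\<^sub>1 \<in> units" "w\<^sub>2 \<in> units" and r: "r = w\<^sub>1 * e * w\<^sub>2"
    using nd by (auto simp: normal_decomp_def)
  obtain \<sigma>\<^sub>1 \<sigma>\<^sub>2 where \<sigma>: "\<sigma>\<^sub>1 \<in> lists S" "prod_list \<sigma>\<^sub>1 = w\<^sub>1" "length \<sigma>\<^sub>1 = cox_len S w\<^sub>1"
    "\<sigma>\<^sub>2 \<in> lists S" "prod_list \<sigma>\<^sub>2 = w\<^sub>2" "length \<sigma>\<^sub>2 = cox_len S w\<^sub>2"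
    using reduced_word_exists w by metis
  then obtain \<omega> where \<omega>: "\<omega> \<in> lists (S \<union> (\<Lambda> - {1}))" "prod_list \<omega> = r"
    "S_count \<omega> = cox_len S w\<^sub>1 + cox_len S w\<^sub>2"
    using word_through_Lambda[OF \<sigma>(1,4) e] r by auto
  hence upper: "rlen \<Lambda> S r \<le> cox_len S w\<^sub>1 + cox_len S w\<^sub>2" using rlen_le by metis
  obtain a f b where "a \<in> units" "b \<in> units" "f \<in> \<Lambda>" "r = a * f * b"
    "cox_len S a + cox_len S b \<le> rlen \<Lambda> S r"
    using rlen_ge_decomp \<omega>(1,2) by blast
  hence "cox_len S w\<^sub>1 + cox_len S w\<^sub>2 \<le> rlen \<Lambda> S r"
    using normal_decomp_cox_len_le[OF nd] by fastforce
  thus ?thesis using upper rlen_unit w by simp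
qed

end

lemma gen_renner_coxeter_imp_renner_coxeter:
  assumes "gen_renner_coxeter \<Lambda> S"
  obtains m where "renner_coxeter \<Lambda> S m"
proof -
  have A: "factorisable TYPE('a)" "\<Lambda> \<subseteq> idems"
     "\<forall>e\<in>idems. \<exists>f\<in>\<Lambda>. \<exists>g\<in>units. unit_conj g f e"
     "\<forall>f\<^sub>1\<in>\<Lambda>. \<forall>f\<^sub>2\<in>\<Lambda>. (\<exists>g\<in>units. unit_conj g f\<^sub>1 f\<^sub>2) \<longrightarrow> f\<^sub>1 = f\<^sub>2"
     "coxeter_system S"
     "\<forall>e\<^sub>1\<in>idems. \<forall>e\<^sub>2\<in>idems. idem_le e\<^sub>1 e\<^sub>2 \<longrightarrow>
        (\<exists>w\<in>units. \<exists>f\<^sub>1\<in>\<Lambda>. \<exists>f\<^sub>2\<in>\<Lambda>. idem_le f\<^sub>1 f\<^sub>2 \<and> unit_conj w f\<^sub>1 e\<^sub>1 \<and> unit_conj w f\<^sub>2 e\<^sub>2)"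
     "\<forall>e\<in>\<Lambda>. \<exists>I\<subseteq>S. W_cent e = parabolic I"
    using assms unfolding gen_renner_coxeter_def by simp_all
  from A(5) obtain m :: "'a \<Rightarrow> 'a \<Rightarrow> nat" where "S \<subseteq> units" "\<forall>s\<in>S. s * s = 1"
    "\<forall>g\<in>units. \<exists>u\<in>lists S. prod_list u = g"
    "\<forall>u\<in>lists S. \<forall>v\<in>lists S. prod_list u = prod_list v \<longleftrightarrow> cox_equiv S m u v"
    unfolding coxeter_system_def by auto
  hence "coxeter_presentation S m" by (intro coxeter_presentation.intro) blast+
  moreover have "renner_coxeter_axioms \<Lambda> S"
  proof
    show "e * f = f * e" if "e \<in> idems" "f \<in> idems" for e f :: 'a
      using A(1) that unfolding factorisable_def by blast
    show "\<Lambda> \<subseteq> idems" by (rule A(2))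
    show "\<exists>f\<in>\<Lambda>. \<exists>g\<in>units. unit_conj g f e" if "e \<in> idems" for e
      using A(3) that by blast
    show "f\<^sub>1 = f\<^sub>2" if "f\<^sub>1 \<in> \<Lambda>" "f\<^sub>2 \<in> \<Lambda>" "g \<in> units" "unit_conj g f\<^sub>1 f\<^sub>2" for f\<^sub>1 f\<^sub>2 g
      using A(4) that by blast
    show "\<exists>w\<in>units. \<exists>f\<^sub>1\<in>\<Lambda>. \<exists>f\<^sub>2\<in>\<Lambda>. idem_le f\<^sub>1 f\<^sub>2 \<and> unit_conj w f\<^sub>1 e\<^sub>1 \<and> unit_conj w f\<^sub>2 e\<^sub>2"
      if "e\<^sub>1 \<in> idems" "e\<^sub>2 \<in> idems" "idem_le e\<^sub>1 e\<^sub>2" for e\<^sub>1 e\<^sub>2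
      using A(6) that by blast
    show "\<exists>I\<subseteq>S. W_cent e = parabolic I" if "e \<in> \<Lambda>" for e
      using A(7) that by blast
  qed
  ultimately show thesis using that by (simp add: renner_coxeter_def)
qed

theorem mainTheorem12:
  fixes \<Lambda> S :: "'a::monoid_mult set" and r w1 e w2 :: 'a
  assumes "gen_renner_coxeter \<Lambda> S"
    and "normal_decomp \<Lambda> S r w1 e w2"
  shows "rlen \<Lambda> S r = rlen \<Lambda> S w1 + rlen \<Lambda> S w2"
proof -
  obtain m where "renner_coxeter \<Lambda> S m"
    using gen_renner_coxeter_imp_renner_coxeter[OF assms(1)] .
  thus ?thesis using renner_coxeter.rlen_normal_decomp[OF _ assms(2)] by blast
qed

end
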